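(* Fix $R_{\rm eff}>0$ and suppose that all link SNRs $\gamma^{SR}_k,\gamma^{SD}_k,\gamma^{RD}_k$, $k=1,\dots,K$, are i.i.d. with a common cumulative distribution function $F$ supported on $[0,\infty)$, and let $\gamma,\gamma',\gamma''$ denote independent random variables with CDF $F$. Then: (i) for every $K\ge1$, $\bar J^{\text{no relay}}_K(R_{\rm eff})<\infty$ if and only if $\Phi_1:=\mathbb{E}[1/\gamma]<\infty$; (ii) for every $K\ge2$, if $\Phi_2:=\mathbb{E}[1/\max(\gamma',\gamma'')]<\infty$ then $\bar J_K(R_{\rm eff})<\infty$.
   Context: Notation: $I(x)=\log(1+x)$, $I^{-1}(x)=e^x-1$, $\tilde\gamma_k=\max(\gamma^{SD}_k,\gamma^{RD}_k)$. Relay problem with $K$ slots and message size $B=KR_{\rm eff}$ nats: in slot $k$ the link SNRs are $(\gamma^{SR}_k,\gamma^{SD}_k,\gamma^{RD}_k)$; a power $p_k\ge0$ is chosen causally (as a function of the SNRs of slots $1,\dots,k$). Remaining information: $b^R_1=b^D_1=B$; if $b^R_k>0$ (Phase 1, the source transmits) then $b^R_{k+1}=b^R_k-I(p_k\gamma^{SR}_k)$, $b^D_{k+1}=b^D_k-I(p_k\gamma^{SD}_k)$; if $b^R_k\le0$ (Phase 2, whichever of source/relay has the larger SNR to the destination transmits) then $b^R_{k+1}=b^R_k$, $b^D_{k+1}=b^D_k-I(p_k\tilde\gamma_k)$. The constraint is $b^D_{K+1}\le0$ a.s. The NMESE is $\bar J_K(R_{\rm eff})=\frac1K\mathbb{E}_{\boldsymbol\gamma_1}[J^\star(\boldsymbol\gamma_1)]$,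 where $J^\star(\boldsymbol\gamma_1)$ is the infimum over causal feasible policies of $\mathbb{E}[\sum_{k=1}^Kp_k\mid\boldsymbol\gamma_1]$. "No relaying" means the same problem with $\gamma^{SR}_k\equiv0$ (Phase 2 never occurs; constraint $\sum_kI(p_k\gamma^{SD}_k)\ge B$); its NMESE is $\bar J^{\text{no relay}}_K(R_{\rm eff})$. *)

theory Defs
  imports "HOL-Probability.Probability"
begin

type_synonym snr = "real \<times> real \<times> real"  (* (gamma_SR, gamma_SD, gamma_RD) of one slot *)

definition Icap :: "real \<Rightarrow> real" where
  "Icap x = ln (1 + x)"

definition step :: "real \<times> real \<Rightarrow> real \<Rightarrow> snr \<Rightarrow> real \<times> real" where
  "step b p s = (case b of (bR, bD) \<Rightarrow> (case s of (sr, sd, rd) \<Rightarrow>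
     if bR > 0 then (bR - Icap (p * sr), bD - Icap (p * sd))
     else (bR, bD - Icap (p * max sd rd))))"

(* bstate B P g k = (b^R_{k+1}, b^D_{k+1}); slots are indexed 1..K, power in slot k is P k g *)
primrec bstate :: "real \<Rightarrow> (nat \<Rightarrow> (nat \<Rightarrow> snr) \<Rightarrow> real) \<Rightarrow> (nat \<Rightarrow> snr) \<Rightarrow> nat \<Rightarrow> real \<times> real" where
  "bstate B P g 0 = (B, B)"
| "bstate B P g (Suc k) = step (bstate B P g k) (P (Suc k) g) (g (Suc k))"

(* conditional law of the slots 2..K (i.i.d. with per-slot law S) *)
abbreviation rest_law :: "snr measure \<Rightarrow> nat \<Rightarrow> (nat \<Rightarrow> snr) measure" where
  "rest_law S K \<equiv> PiM {2..K} (\<lambda>_. S)"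

(* causal, nonnegative, measurable policy meeting b^D_{K+1} <= 0 a.s., given first-slot SNRs x *)
definition feasible :: "snr measure \<Rightarrow> nat \<Rightarrow> real \<Rightarrow> snr \<Rightarrow> (nat \<Rightarrow> (nat \<Rightarrow> snr) \<Rightarrow> real) \<Rightarrow> bool" where
  "feasible S K B x P \<longleftrightarrow>
     (\<forall>k g g'. (\<forall>j\<in>{1..k}. g j = g' j) \<longrightarrow> P k g = P k g') \<and>
     (\<forall>k g. 0 \<le> P k g) \<and>
     (\<forall>k\<in>{1..K}. (\<lambda>g. P k (g(1 := x))) \<in> borel_measurable (rest_law S K)) \<and>
     (AE g in rest_law S K. snd (bstate B P (g(1 := x)) K) \<le> 0)"

(* J*(gamma_1): infimum over feasible causal policies of the conditional expected total power *)
definition Jstar :: "snr measure \<Rightarrow> nat \<Rightarrow> real \<Rightarrow> snr \<Rightarrow> ennreal" where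
  "Jstar S K B x = (INF P \<in> {P. feasible S K B x P}.
      \<integral>\<^sup>+ g. (\<Sum>k\<in>{1..K}. ennreal (P k (g(1 := x)))) \<partial>(rest_law S K))"

definition NMESE :: "snr measure \<Rightarrow> nat \<Rightarrow> real \<Rightarrow> ennreal" where
  "NMESE S K R = ennreal (1 / real K) * (\<integral>\<^sup>+ x. Jstar S K (real K * R) x \<partial>S)"

definition slot_law :: "real measure \<Rightarrow> snr measure" where
  "slot_law M = M \<Otimes>\<^sub>M (M \<Otimes>\<^sub>M M)"

(* no relaying: gamma_SR forced to 0 *)
definition slot_law_norelay :: "real measure \<Rightarrow> snr measure" where
  "slot_law_norelay M = distr (slot_law M) (slot_law M) (\<lambda>(a, b, c). (0, b, c))"

definition NMESE_relay :: "real measure \<Rightarrow> nat \<Rightarrow> real \<Rightarrow> ennreal" where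
  "NMESE_relay M K R = NMESE (slot_law M) K R"

definition NMESE_norelay :: "real measure \<Rightarrow> nat \<Rightarrow> real \<Rightarrow> ennreal" where
  "NMESE_norelay M K R = NMESE (slot_law_norelay M) K R"

(* Phi_1 = E[1/gamma], Phi_2 = E[1/max(gamma',gamma'')], with 1/0 = infinity *)
definition Phi1 :: "real measure \<Rightarrow> ennreal" where
  "Phi1 M = (\<integral>\<^sup>+ x. inverse (ennreal x) \<partial>M)"

definition Phi2 :: "real measure \<Rightarrow> ennreal" where
  "Phi2 M = (\<integral>\<^sup>+ z. inverse (ennreal (max (fst z) (snd z))) \<partial>(M \<Otimes>\<^sub>M M))"

end

theory Submission
  imports Defs
begin

(*
  Achievability (the "if" direction of (i), and (ii)) is proved by exhibiting a feasible
  memoryless policy, i.e. one whose power in slot k depends only on the SNRs of slot k: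
  without a relay, deliver R nats in every slot with power (e^R - 1)/gamma_SD, whose cost
  is at most (e^R - 1) E[1/gamma] per slot; with a relay, deliver all B nats in slot 1 to
  the better of relay and destination and, in slot 2, from the better of source and relay
  to the destination, each at cost at most (e^B - 1) E[1/max(gamma',gamma'')].

  The converse ("only if" in (i)) is a backward induction over the slots.  Without a relay
  the remaining information b^D only decreases by I(p_k gamma^SD_k); the power of slot m+1
  must therefore be at least (e^{b^D_{m+1}} - 1)/gamma^SD_{m+1}, where b^D_{m+1} does not
  depend on slot m+1.  By independence the expected cost is at least
  E[e^{b^D_{m+1}} - 1] E[1/gamma], so if E[1/gamma] = infinity and the cost is finite, then
  b^D_{m+1} <= 0 almost surely.  Descending to the first slot, the whole message must be
  delivered in slot 1, at cost (e^B - 1)/gamma^SD_1, whose expectation is infinite.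
*)

section \<open>Information dynamics\<close>

lemma bstate_causal:
  assumes causal: "\<forall>k g g'. (\<forall>j\<in>{1..k}. g j = g' j) \<longrightarrow> P k g = P k g'"
  shows "(\<forall>i\<in>{1..m}. g i = g' i) \<Longrightarrow> bstate B P g m = bstate B P g' m"
proof (induction m)
  case (Suc m)
  then have "bstate B P g m = bstate B P g' m" "g (Suc m) = g' (Suc m)" by auto
  moreover have "P (Suc m) g = P (Suc m) g'" using causal Suc.prems by blast
  ultimately show ?case by simp
qed simp

lemma bstate_dead_relay:
  assumes "B > 0" and "\<forall>k\<in>{1..m}. fst (G k) = 0"
  shows "bstate B P G m = (B, B - (\<Sum>k=1..m. Icap (P k G * fst (snd (G k)))))"
  using assms(2)
proof (induction m)
  case (Suc m)
  then have "bstate B P G m = (B, B - (\<Sum>k=1..m. Icap (P k G * fst (snd (G k)))))"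
    and "fst (G (Suc m)) = 0" by auto
  then show ?case
    using \<open>B > 0\<close> by (cases "G (Suc m)") (simp add: step_def Icap_def)
qed simp

lemma snd_step_zero_power: "snd (step b 0 s) = snd b"
  by (auto simp: step_def Icap_def split: prod.splits)

lemma step_eq:
  "step b p s = (if fst b > 0
     then (fst b - Icap (p * fst s), snd b - Icap (p * fst (snd s)))
     else (fst b, snd b - Icap (p * max (fst (snd s)) (snd (snd s)))))"
  by (auto simp: step_def split: prod.splits)

lemma Icap_exp_minus_one: "Icap (exp t - 1) = t"
  by (simp add: Icap_def)

text \<open>Delivering t nats over a link of SNR d needs power at least (e^t - 1)/d; this is the
  pointwise lower bound behind the converse.\<close>
lemma power_needed:
  fixes p d t :: real
  assumes p: "0 \<le> p" and d: "0 \<le> d" and t: "t \<le> Icap (p * d)"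
  shows "ennreal (exp t - 1) * inverse (ennreal d) \<le> ennreal p"
proof (cases "t \<le> 0")
  case True
  then have "ennreal (exp t - 1) = 0" by (simp add: ennreal_eq_0_iff)
  then show ?thesis by simp
next
  case False
  have "0 \<le> p * d" using p d by simp
  then have "exp t \<le> 1 + p * d" using t by (simp add: Icap_def ln_ge_iff)
  then have e: "exp t - 1 \<le> p * d" by simp
  have et: "exp t - 1 > 0" using False by simp
  then have d0: "d > 0" using e d by (cases "d = 0") auto
  have "(exp t - 1) / d \<le> p" using e d0 by (simp add: divide_le_eq mult.commute)
  moreover have "ennreal (exp t - 1) * inverse (ennreal d) = ennreal ((exp t - 1) / d)"
    using d0 et by (simp add: inverse_ennreal ennreal_mult[symmetric] divide_inverse)
  ultimately show ?thesis by (simp add: ennreal_leI)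
qed

lemma power_needed_dead_relay:
  assumes B: "B > 0" and dead: "\<forall>k\<in>{1..Suc m}. fst (G k) = 0"
    and p: "0 \<le> P (Suc m) G" and d: "0 \<le> fst (snd (G (Suc m)))"
    and completed: "snd (bstate B P G (Suc m)) \<le> 0"
  shows "ennreal (exp (snd (bstate B P G m)) - 1) * inverse (ennreal (fst (snd (G (Suc m)))))
      \<le> ennreal (P (Suc m) G)"
proof (rule power_needed[OF p d])
  have "bstate B P G (Suc m) = (B, B - (\<Sum>k=1..Suc m. Icap (P k G * fst (snd (G k)))))"
    by (rule bstate_dead_relay[OF B dead])
  moreover have "bstate B P G m = (B, B - (\<Sum>k=1..m. Icap (P k G * fst (snd (G k)))))"
    by (rule bstate_dead_relay[OF B]) (use dead in auto)
  ultimately have "snd (bstate B P G (Suc m))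
      = snd (bstate B P G m) - Icap (P (Suc m) G * fst (snd (G (Suc m))))"
    by simp
  then show "snd (bstate B P G m) \<le> Icap (P (Suc m) G * fst (snd (G (Suc m))))"
    using completed by simp
qed

definition power_for :: "real \<Rightarrow> real \<Rightarrow> real" where
  "power_for c t = (if 0 < t then c / t else 0)"

lemma power_for_nonneg: "0 \<le> c \<Longrightarrow> 0 \<le> power_for c t"
  by (simp add: power_for_def)

lemma power_for_delivers: "0 < t \<Longrightarrow> power_for c t * t = c"
  by (simp add: power_for_def)

lemma power_for_le: "0 \<le> c \<Longrightarrow> ennreal (power_for c t) \<le> ennreal c * inverse (ennreal t)"
  by (cases "0 < t") (simp_all add: power_for_def inverse_ennreal ennreal_mult[symmetric] divide_inverse)

lemma borel_measurable_power_for[measurable]: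
  assumes [measurable]: "f \<in> borel_measurable N"
  shows "(\<lambda>x. power_for c (f x)) \<in> borel_measurable N"
  unfolding power_for_def by measurable

section \<open>Marginals of product probability spaces\<close>

lemma distr_pair_snd:
  assumes "prob_space A" "sigma_finite_measure B"
  shows "distr (A \<Otimes>\<^sub>M B) B snd = B"
proof (rule measure_eqI)
  interpret A: prob_space A by fact
  fix X assume "X \<in> sets (distr (A \<Otimes>\<^sub>M B) B snd)"
  then have X: "X \<in> sets B" by simp
  then have "snd -` X \<inter> space (A \<Otimes>\<^sub>M B) = space A \<times> X"
    by (auto simp: space_pair_measure dest: sets.sets_into_space)
  then show "emeasure (distr (A \<Otimes>\<^sub>M B) B snd) X = emeasure B X"
    using X by (simp add: emeasure_distr A.emeasure_space_1
        sigma_finite_measure.emeasure_pair_measure_Times[OF assms(2)])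
qed simp

lemma
  assumes "prob_space A" "prob_space B"
  shows AE_pair_fst: "AE x in A. P x \<Longrightarrow> AE z in A \<Otimes>\<^sub>M B. P (fst z)"
    and AE_pair_snd: "AE y in B. Q y \<Longrightarrow> AE z in A \<Otimes>\<^sub>M B. Q (snd z)"
    and nn_integral_pair_fst:
      "f \<in> borel_measurable A \<Longrightarrow> (\<integral>\<^sup>+ z. f (fst z) \<partial>(A \<Otimes>\<^sub>M B)) = integral\<^sup>N A f"
    and nn_integral_pair_snd:
      "h \<in> borel_measurable B \<Longrightarrow> (\<integral>\<^sup>+ z. h (snd z) \<partial>(A \<Otimes>\<^sub>M B)) = integral\<^sup>N B h"
proof -
  have marg_fst: "distr (A \<Otimes>\<^sub>M B) A fst = A"
    by (rule prob_space.distr_pair_fst[OF assms(2)])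
  have marg_snd: "distr (A \<Otimes>\<^sub>M B) B snd = B"
    using assms by (intro distr_pair_snd) (simp_all add: prob_space_imp_sigma_finite)
  show "AE z in A \<Otimes>\<^sub>M B. P (fst z)" if "AE x in A. P x"
    using AE_distrD[of fst "A \<Otimes>\<^sub>M B" A P] that unfolding marg_fst by simp
  show "AE z in A \<Otimes>\<^sub>M B. Q (snd z)" if "AE y in B. Q y"
    using AE_distrD[of snd "A \<Otimes>\<^sub>M B" B Q] that unfolding marg_snd by simp
  show "f \<in> borel_measurable A \<Longrightarrow> (\<integral>\<^sup>+ z. f (fst z) \<partial>(A \<Otimes>\<^sub>M B)) = integral\<^sup>N A f"
    using nn_integral_distr[of fst "A \<Otimes>\<^sub>M B" A f] marg_fst by simp
  show "h \<in> borel_measurable B \<Longrightarrow> (\<integral>\<^sup>+ z. h (snd z) \<partial>(A \<Otimes>\<^sub>M B)) = integral\<^sup>N B h"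
    using nn_integral_distr[of snd "A \<Otimes>\<^sub>M B" B h] marg_snd by simp
qed

lemma nn_integral_PiM_factor:
  fixes S :: "'a measure"
  assumes S: "prob_space S" and J: "finite J" "j \<in> J"
    and phi: "\<phi> \<in> borel_measurable (PiM J (\<lambda>_. S))"
    and indep: "\<And>g y. \<phi> (g(j := y)) = \<phi> g"
    and psi: "\<psi> \<in> borel_measurable S"
  shows "(\<integral>\<^sup>+ g. \<phi> g * \<psi> (g j) \<partial>PiM J (\<lambda>_. S)) = (\<integral>\<^sup>+ g. \<phi> g \<partial>PiM J (\<lambda>_. S)) * integral\<^sup>N S \<psi>"
proof -
  interpret S: prob_space S by (rule S)
  interpret PS: product_prob_space "\<lambda>_. S" by (rule product_prob_spaceI) (rule S)
  define I where "I = J - {j}"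
  have JI: "J = insert j I" "j \<notin> I" "finite I" using J by (auto simp: I_def)
  obtain y0 where y0: "y0 \<in> space S" using S.not_empty by blast
  have "(\<lambda>g. g(j := y0)) \<in> PiM I (\<lambda>_. S) \<rightarrow>\<^sub>M PiM J (\<lambda>_. S)"
    using y0 by (intro measurable_fun_upd[where J = I]) (auto simp: JI)
  from measurable_comp[OF this phi]
  have phi_I: "\<phi> \<in> borel_measurable (PiM I (\<lambda>_. S))" by (simp add: comp_def indep)
  have "(\<integral>\<^sup>+ g. \<phi> g * \<psi> (g j) \<partial>PiM J (\<lambda>_. S)) = (\<integral>\<^sup>+ g. \<integral>\<^sup>+ y. \<phi> g * \<psi> y \<partial>S \<partial>PiM I (\<lambda>_. S))"
    unfolding JI using JI phi psi
    by (subst PS.product_nn_integral_insert) (simp_all add: indep)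
  also have "\<dots> = (\<integral>\<^sup>+ g. \<phi> g * integral\<^sup>N S \<psi> \<partial>PiM I (\<lambda>_. S))"
    using psi by (simp add: nn_integral_cmult)
  also have "\<dots> = (\<integral>\<^sup>+ g. \<phi> g \<partial>PiM I (\<lambda>_. S)) * integral\<^sup>N S \<psi>"
    using phi_I by (rule nn_integral_multc)
  also have "(\<integral>\<^sup>+ g. \<phi> g \<partial>PiM I (\<lambda>_. S)) = (\<integral>\<^sup>+ g. \<phi> g \<partial>PiM J (\<lambda>_. S))"
    unfolding JI using JI phi
    by (subst PS.product_nn_integral_insert) (simp_all add: indep S.emeasure_space_1)
  finally show ?thesis .
qed

section \<open>Two explicit memoryless policies\<close>

text \<open>A memoryless policy uses in slot k a power depending only on the SNRs of slot k;
  such a policy is automatically causal.\<close>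
definition memoryless :: "(nat \<Rightarrow> snr \<Rightarrow> real) \<Rightarrow> nat \<Rightarrow> (nat \<Rightarrow> snr) \<Rightarrow> real" where
  "memoryless q k g = (if k = 0 then 0 else q k (g k))"

lemma constant_rate_completes:
  assumes R: "R > 0" and K: "K \<ge> 1" and G: "\<forall>k\<in>{1..K}. fst (G k) = 0 \<and> 0 < fst (snd (G k))"
  shows "snd (bstate (real K * R) (memoryless (\<lambda>k s. power_for (exp R - 1) (fst (snd s)))) G K) = 0"
proof -
  have "(\<Sum>k=1..K. Icap (memoryless (\<lambda>k s. power_for (exp R - 1) (fst (snd s))) k G
      * fst (snd (G k)))) = (\<Sum>k=1..K. R)"
    using G by (intro sum.cong) (simp_all add: memoryless_def power_for_delivers Icap_exp_minus_one)
  then show ?thesis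
    using bstate_dead_relay[of "real K * R" K G] R K G by simp
qed

text \<open>With relaying: in slot 1 the source sends the whole message to the better of relay
  and destination, in slot 2 the better of source and relay sends it to the destination,
  and afterwards nobody transmits.\<close>
definition two_slot_powers :: "real \<Rightarrow> nat \<Rightarrow> snr \<Rightarrow> real" where
  "two_slot_powers c k s =
     (if k = 1 then power_for c (max (fst s) (fst (snd s)))
      else if k = 2 then power_for c (max (fst (snd s)) (snd (snd s))) else 0)"

lemma two_slot_after_first:
  assumes B: "B > 0" and s: "0 \<le> fst s" "0 \<le> fst (snd s)" "0 < max (fst s) (fst (snd s))"
    and b1: "b1 = step (B, B) (power_for (exp B - 1) (max (fst s) (fst (snd s)))) s"
  shows "snd b1 \<le> B" and "fst b1 > 0 \<Longrightarrow> snd b1 = 0"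
proof -
  define p1 where "p1 = power_for (exp B - 1) (max (fst s) (fst (snd s)))"
  have c: "exp B - 1 > 0" using B by simp
  have b1: "b1 = step (B, B) p1 s" by (simp add: b1 p1_def)
  show "snd b1 \<le> B" using s B c by (simp add: b1 step_eq Icap_def p1_def power_for_nonneg)
  assume relay_missing: "fst b1 > 0"
  have "fst s < fst (snd s)"
  proof (rule ccontr)
    assume "\<not> fst s < fst (snd s)"
    then have "max (fst s) (fst (snd s)) = fst s" "0 < fst s" using s by auto
    then have "p1 * fst s = exp B - 1" by (simp add: p1_def power_for_delivers)
    then have "fst b1 = 0" using B by (simp add: b1 step_eq Icap_exp_minus_one)
    with relay_missing show False by simp
  qed
  then show "snd b1 = 0"
    using s B by (simp add: b1 step_eq p1_def power_for_delivers max_def Icap_exp_minus_one)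
qed

lemma two_slot_completes:
  assumes B: "B > 0"
    and G1: "0 \<le> fst (G 1)" "0 \<le> fst (snd (G 1))" "0 < max (fst (G 1)) (fst (snd (G 1)))"
    and G2: "0 \<le> fst (snd (G 2))" "0 \<le> snd (snd (G 2))"
      "0 < max (fst (snd (G 2))) (snd (snd (G 2)))"
    and m: "2 \<le> m"
  shows "snd (bstate B (memoryless (two_slot_powers (exp B - 1))) G m) \<le> 0"
  using m
proof (induction rule: dec_induct)
  case base
  define b1 where "b1 = bstate B (memoryless (two_slot_powers (exp B - 1))) G 1"
  define p2 where "p2 = power_for (exp B - 1) (max (fst (snd (G 2))) (snd (snd (G 2))))"
  have c: "exp B - 1 > 0" using B by simp
  have first: "snd b1 \<le> B" "fst b1 > 0 \<Longrightarrow> snd b1 = 0"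
    using two_slot_after_first[OF B G1] by (simp_all add: b1_def memoryless_def two_slot_powers_def)
  have "bstate B (memoryless (two_slot_powers (exp B - 1))) G 2 = step b1 p2 (G 2)"
    by (simp add: b1_def p2_def memoryless_def two_slot_powers_def numeral_2_eq_2)
  moreover have "snd (step b1 p2 (G 2)) \<le> 0"
  proof (cases "fst b1 > 0")
    case True
    \<comment> \<open>the destination already decoded; the source's transmission cannot hurt\<close>
    then show ?thesis
      using first c G2 by (simp add: step_eq Icap_def p2_def power_for_nonneg)
  next
    case False
    \<comment> \<open>the relay decoded; the better of source and relay delivers B nats\<close>
    then show ?thesis
      using first G2 by (simp add: step_eq p2_def power_for_delivers Icap_exp_minus_one)
  qed
  ultimately show ?case by simp
next
  case (step m)
  then show ?case
    by (simp add: memoryless_def two_slot_powers_def snd_step_zero_power)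
qed

section \<open>Policies for an arbitrary per-slot law\<close>

lemma measurable_step [measurable]:
  assumes [measurable]: "b \<in> N \<rightarrow>\<^sub>M borel \<Otimes>\<^sub>M borel" "p \<in> borel_measurable N"
    "s \<in> N \<rightarrow>\<^sub>M borel \<Otimes>\<^sub>M (borel \<Otimes>\<^sub>M borel)"
  shows "(\<lambda>\<omega>. step (b \<omega>) (p \<omega>) (s \<omega>)) \<in> N \<rightarrow>\<^sub>M borel \<Otimes>\<^sub>M borel"
  unfolding step_eq Icap_def by measurable

locale slot_law_space = prob_space S for S :: "snr measure" +
  assumes sets_S [measurable_cong]: "sets S = sets (borel \<Otimes>\<^sub>M (borel \<Otimes>\<^sub>M (borel::real measure)))"
begin

lemma space_S: "space S = UNIV"
  using sets_eq_imp_space_eq[OF sets_S] by (simp add: space_pair_measure)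

lemma prob_space_rest: "prob_space (rest_law S K)"
  by (intro prob_space_PiM prob_space_axioms)

lemma measurable_slot_fixed_first:
  assumes "k \<in> {1..K}"
  shows "(\<lambda>g. (g(1 := x)) k) \<in> rest_law S K \<rightarrow>\<^sub>M S"
proof (cases "k = 1")
  case False
  then have "(\<lambda>g. (g(1 := x)) k) = (\<lambda>g. g k)" by auto
  then show ?thesis using assms False by (simp add: measurable_component_singleton)
qed (simp add: space_S)

lemma nn_integral_rest_slot:
  assumes "k \<in> {2..K}" and "f \<in> borel_measurable S"
  shows "(\<integral>\<^sup>+ g. f (g k) \<partial>rest_law S K) = integral\<^sup>N S f"
proof -
  have "distr (rest_law S K) S (\<lambda>g. g k) = S"
    using distr_PiM_component[of "{2..K}" "\<lambda>_. S" k] assms(1) prob_space_axioms by simp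
  then show ?thesis
    using nn_integral_distr[of "\<lambda>g. g k" "rest_law S K" S f] assms
    by (simp add: measurable_component_singleton)
qed

lemma AE_rest_slots:
  assumes "AE y in S. Q y"
  shows "AE g in rest_law S K. \<forall>k\<in>{2..K}. Q (g k)"
  by (rule AE_finite_allI) (use AE_PiM_component[of "{2..K}" "\<lambda>_. S", OF prob_space_axioms] assms in auto)

lemma measurable_bstate:
  assumes P: "\<forall>k\<in>{1..K}. (\<lambda>g. P k (g(1 := x))) \<in> borel_measurable (rest_law S K)"
  shows "m \<le> K \<Longrightarrow> (\<lambda>g. bstate B P (g(1 := x)) m) \<in> rest_law S K \<rightarrow>\<^sub>M borel \<Otimes>\<^sub>M borel"
proof (induction m)
  case (Suc m)
  have "(\<lambda>g. step (bstate B P (g(1 := x)) m) (P (Suc m) (g(1 := x))) ((g(1 := x)) (Suc m)))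
      \<in> rest_law S K \<rightarrow>\<^sub>M borel \<Otimes>\<^sub>M borel"
  proof (rule measurable_step)
    show "(\<lambda>g. bstate B P (g(1 := x)) m) \<in> rest_law S K \<rightarrow>\<^sub>M borel \<Otimes>\<^sub>M borel"
      by (rule Suc.IH) (use Suc.prems in simp)
    show "(\<lambda>g. P (Suc m) (g(1 := x))) \<in> borel_measurable (rest_law S K)"
      using P Suc.prems by simp
    show "(\<lambda>g. (g(1 := x)) (Suc m)) \<in> rest_law S K \<rightarrow>\<^sub>M borel \<Otimes>\<^sub>M (borel \<Otimes>\<^sub>M borel)"
      using measurable_slot_fixed_first[of "Suc m" K x] Suc.prems
      unfolding measurable_cong_sets[OF refl sets_S] by simp
  qed
  then show ?case by (simp del: fun_upd_apply)
qed simp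

lemma feasible_memoryless:
  assumes nonneg: "\<And>k s. 0 \<le> q k s" and meas: "\<And>k. q k \<in> borel_measurable S"
    and completes: "AE g in rest_law S K. snd (bstate B (memoryless q) (g(1 := x)) K) \<le> 0"
  shows "feasible S K B x (memoryless q)"
  unfolding feasible_def
proof (intro conjI ballI)
  fix k assume k: "k \<in> {1..K}"
  have "(\<lambda>g. q k ((g(1 := x)) k)) \<in> borel_measurable (rest_law S K)"
    using measurable_comp[OF measurable_slot_fixed_first[OF k] meas] by (simp add: comp_def)
  then show "(\<lambda>g. memoryless q k (g(1 := x))) \<in> borel_measurable (rest_law S K)"
    using k by (simp add: memoryless_def)
qed (use nonneg completes in \<open>auto simp: memoryless_def\<close>)

lemma Jstar_memoryless:
  assumes feas: "feasible S K B x (memoryless q)" and meas: "\<And>k. q k \<in> borel_measurable S"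
    and K: "K \<ge> 1"
  shows "Jstar S K B x \<le> ennreal (q 1 x) + (\<Sum>k=2..K. \<integral>\<^sup>+ s. ennreal (q k s) \<partial>S)"
proof -
  interpret R: prob_space "rest_law S K" by (rule prob_space_rest)
  have slot_meas: "(\<lambda>g. ennreal (q k ((g(1 := x)) k))) \<in> borel_measurable (rest_law S K)"
    if "k \<in> {1..K}" for k
    using measurable_comp[OF measurable_slot_fixed_first[OF that] meas] by (simp add: comp_def)
  have split: "{1..K} = insert 1 {2..K}" using K by auto
  have "Jstar S K B x \<le> (\<integral>\<^sup>+ g. (\<Sum>k=1..K. ennreal (memoryless q k (g(1 := x)))) \<partial>rest_law S K)"
    unfolding Jstar_def using feas by (intro INF_lower) simp
  also have "\<dots> = (\<Sum>k=1..K. \<integral>\<^sup>+ g. ennreal (q k ((g(1 := x)) k)) \<partial>rest_law S K)"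
    using slot_meas by (subst nn_integral_sum) (auto simp: memoryless_def)
  also have "\<dots> = ennreal (q 1 x) + (\<Sum>k=2..K. \<integral>\<^sup>+ s. ennreal (q k s) \<partial>S)"
  proof -
    have "(\<integral>\<^sup>+ g. ennreal (q k ((g(1 := x)) k)) \<partial>rest_law S K) = (\<integral>\<^sup>+ s. ennreal (q k s) \<partial>S)"
      if "k \<in> {2..K}" for k
      using that nn_integral_rest_slot[OF that, of "\<lambda>s. ennreal (q k s)"] meas by simp
    then show ?thesis unfolding split by (simp add: R.emeasure_space_1)
  qed
  finally show ?thesis .
qed

lemma NMESE_finite:
  assumes h: "h \<in> borel_measurable S" "integral\<^sup>N S h < \<infinity>" and b: "b < \<infinity>"
    and bound: "AE x in S. Jstar S K (real K * R) x \<le> h x + b"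
  shows "NMESE S K R < \<infinity>"
proof -
  have "(\<integral>\<^sup>+ x. Jstar S K (real K * R) x \<partial>S) \<le> (\<integral>\<^sup>+ x. h x + b \<partial>S)"
    by (rule nn_integral_mono_AE[OF bound])
  also have "\<dots> = integral\<^sup>N S h + b"
    using h by (simp add: nn_integral_add emeasure_space_1)
  also have "\<dots> < \<infinity>" using h b by simp
  finally show ?thesis
    unfolding NMESE_def by (simp add: ennreal_mult_less_top)
qed

lemma AE_power_needed:
  assumes B: "B > 0" and x: "fst x = 0" "0 \<le> fst (snd x)"
    and dead: "AE y in S. fst y = 0 \<and> 0 \<le> fst (snd y)"
    and nonneg: "\<forall>k g. 0 \<le> P k g" and m: "m < K"
    and later: "AE g in rest_law S K. snd (bstate B P (g(1 := x)) (Suc m)) \<le> 0"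
  shows "AE g in rest_law S K. ennreal (exp (snd (bstate B P (g(1 := x)) m)) - 1)
      * inverse (ennreal (fst (snd ((g(1 := x)) (Suc m))))) \<le> ennreal (P (Suc m) (g(1 := x)))"
  using AE_rest_slots[OF dead] later
proof eventually_elim
  case (elim g)
  with x m have "\<forall>k\<in>{1..Suc m}. fst ((g(1 := x)) k) = 0"
    "0 \<le> fst (snd ((g(1 := x)) (Suc m)))" by auto
  with elim(2) show ?case
    using power_needed_dead_relay[OF B, of m "g(1 := x)" P] nonneg by blast
qed

text \<open>Backward step of the converse: without relaying and with E[1/gamma_SD] infinite, a
  policy of finite cost that completes the message by slot m+1 has in fact completed it
  by slot m, because the cost of slot m+1 factorises into E[e^{b^D} - 1] E[1/gamma_SD].\<close>
lemma completed_earlier: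
  assumes B: "B > 0" and x: "fst x = 0" "0 \<le> fst (snd x)"
    and dead: "AE y in S. fst y = 0 \<and> 0 \<le> fst (snd y)"
    and inf: "(\<integral>\<^sup>+ y. inverse (ennreal (fst (snd y))) \<partial>S) = \<infinity>"
    and P: "feasible S K B x P"
    and fin: "(\<integral>\<^sup>+ g. (\<Sum>k=1..K. ennreal (P k (g(1 := x)))) \<partial>rest_law S K) < \<infinity>"
    and m: "1 \<le> m" "m < K"
    and later: "AE g in rest_law S K. snd (bstate B P (g(1 := x)) (Suc m)) \<le> 0"
  shows "AE g in rest_law S K. snd (bstate B P (g(1 := x)) m) \<le> 0"
proof -
  define \<phi> where "\<phi> g = ennreal (exp (snd (bstate B P (g(1 := x)) m)) - 1)" for g
  define \<psi> where "\<psi> y = inverse (ennreal (fst (snd y)))" for y :: snr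
  have causal: "\<forall>k g g'. (\<forall>j\<in>{1..k}. g j = g' j) \<longrightarrow> P k g = P k g'"
    and nonneg: "\<forall>k g. 0 \<le> P k g"
    and P_meas: "\<forall>k\<in>{1..K}. (\<lambda>g. P k (g(1 := x))) \<in> borel_measurable (rest_law S K)"
    using P unfolding feasible_def by blast+
  have [measurable]: "(\<lambda>g. bstate B P (g(1 := x)) m) \<in> rest_law S K \<rightarrow>\<^sub>M borel \<Otimes>\<^sub>M borel"
    using measurable_bstate[OF P_meas] m by simp
  have \<phi>_meas: "\<phi> \<in> borel_measurable (rest_law S K)" unfolding \<phi>_def by measurable
  have \<psi>_meas: "\<psi> \<in> borel_measurable S" unfolding \<psi>_def by measurable
  have \<phi>_indep: "\<phi> (g(Suc m := y)) = \<phi> g" for g y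
    unfolding \<phi>_def using bstate_causal[OF causal, of m "(g(Suc m := y))(1 := x)" "g(1 := x)"]
    by simp
  have "(\<integral>\<^sup>+ g. \<phi> g * \<psi> (g (Suc m)) \<partial>rest_law S K)
      \<le> (\<integral>\<^sup>+ g. ennreal (P (Suc m) (g(1 := x))) \<partial>rest_law S K)"
    using AE_power_needed[OF B x dead nonneg m(2) later] m
    by (intro nn_integral_mono_AE) (simp add: \<phi>_def \<psi>_def)
  also have "\<dots> \<le> (\<integral>\<^sup>+ g. (\<Sum>k=1..K. ennreal (P k (g(1 := x)))) \<partial>rest_law S K)"
    by (intro nn_integral_mono member_le_sum) (use m in auto)
  also have "(\<integral>\<^sup>+ g. \<phi> g * \<psi> (g (Suc m)) \<partial>rest_law S K)
      = (\<integral>\<^sup>+ g. \<phi> g \<partial>rest_law S K) * integral\<^sup>N S \<psi>"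
    by (rule nn_integral_PiM_factor[of S "{2..K}" "Suc m" \<phi> \<psi>])
      (use m in \<open>simp_all add: prob_space_axioms \<phi>_meas \<phi>_indep \<psi>_meas\<close>)
  finally have "(\<integral>\<^sup>+ g. \<phi> g \<partial>rest_law S K) * integral\<^sup>N S \<psi> < \<infinity>"
    using fin by (rule order.strict_trans1)
  moreover have "integral\<^sup>N S \<psi> = \<infinity>" unfolding \<psi>_def by (rule inf)
  ultimately have "(\<integral>\<^sup>+ g. \<phi> g \<partial>rest_law S K) * \<infinity> < \<infinity>" by simp
  then have "(\<integral>\<^sup>+ g. \<phi> g \<partial>rest_law S K) = 0"
    by (cases "(\<integral>\<^sup>+ g. \<phi> g \<partial>rest_law S K) = 0") simp_all
  then have "AE g in rest_law S K. \<phi> g = 0"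
    using nn_integral_0_iff_AE[OF \<phi>_meas] by simp
  then show ?thesis by (rule eventually_mono) (simp add: \<phi>_def ennreal_eq_0_iff)
qed

lemma completed_in_first_slot:
  assumes B: "B > 0" and K: "K \<ge> 1" and x: "fst x = 0" "0 \<le> fst (snd x)"
    and dead: "AE y in S. fst y = 0 \<and> 0 \<le> fst (snd y)"
    and inf: "(\<integral>\<^sup>+ y. inverse (ennreal (fst (snd y))) \<partial>S) = \<infinity>"
    and P: "feasible S K B x P"
    and fin: "(\<integral>\<^sup>+ g. (\<Sum>k=1..K. ennreal (P k (g(1 := x)))) \<partial>rest_law S K) < \<infinity>"
  shows "AE g in rest_law S K. snd (bstate B P (g(1 := x)) 1) \<le> 0"
proof -
  have "AE g in rest_law S K. snd (bstate B P (g(1 := x)) n) \<le> 0" if "n \<le> K" "1 \<le> n" for n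
    using that(1)
  proof (induction rule: inc_induct)
    case base
    show ?case using P unfolding feasible_def by blast
  next
    case (step m)
    have "1 \<le> m" using step.hyps(1) that(2) by simp
    from completed_earlier[OF B x dead inf P fin this step.hyps(2) step.IH] show ?case .
  qed
  from this[OF K order_refl] show ?thesis .
qed

lemma Jstar_dead_relay_lower:
  assumes B: "B > 0" and K: "K \<ge> 1" and x: "fst x = 0" "0 \<le> fst (snd x)"
    and dead: "AE y in S. fst y = 0 \<and> 0 \<le> fst (snd y)"
    and inf: "(\<integral>\<^sup>+ y. inverse (ennreal (fst (snd y))) \<partial>S) = \<infinity>"
  shows "ennreal (exp B - 1) * inverse (ennreal (fst (snd x))) \<le> Jstar S K B x"
  unfolding Jstar_def
proof (rule INF_greatest)
  fix P assume "P \<in> {P. feasible S K B x P}"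
  then have P: "feasible S K B x P" by simp
  interpret R: prob_space "rest_law S K" by (rule prob_space_rest)
  let ?cost = "\<integral>\<^sup>+ g. (\<Sum>k=1..K. ennreal (P k (g(1 := x)))) \<partial>rest_law S K"
  show "ennreal (exp B - 1) * inverse (ennreal (fst (snd x))) \<le> ?cost"
  proof (cases "?cost < \<infinity>")
    case False
    then show ?thesis by (simp add: not_less top_unique)
  next
    case True
    have nonneg: "\<forall>k g. 0 \<le> P k g" using P unfolding feasible_def by blast
    have "AE g in rest_law S K. snd (bstate B P (g(1 := x)) (Suc 0)) \<le> 0"
      using completed_in_first_slot[OF B K x dead inf P True] by simp
    from AE_power_needed[OF B x dead nonneg _ this] K
    have "AE g in rest_law S K.
        ennreal (exp B - 1) * inverse (ennreal (fst (snd x))) \<le> ennreal (P 1 (g(1 := x)))"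
      by simp
    then have "ennreal (exp B - 1) * inverse (ennreal (fst (snd x)))
        \<le> (\<integral>\<^sup>+ g. ennreal (P 1 (g(1 := x))) \<partial>rest_law S K)"
      using nn_integral_mono_AE by (fastforce simp: R.emeasure_space_1)
    also have "\<dots> \<le> ?cost"
      by (intro nn_integral_mono member_le_sum) (use K in auto)
    finally show ?thesis .
  qed
qed

lemma Jstar_constant_rate:
  assumes R: "R > 0" and K: "K \<ge> 1"
    and good: "AE y in S. fst y = 0 \<and> 0 < fst (snd y)" and x: "fst x = 0 \<and> 0 < fst (snd x)"
  shows "Jstar S K (real K * R) x \<le> ennreal (exp R - 1) * inverse (ennreal (fst (snd x)))
      + of_nat K * (ennreal (exp R - 1) * (\<integral>\<^sup>+ s. inverse (ennreal (fst (snd s))) \<partial>S))"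
proof -
  define c where "c = exp R - 1"
  define q where "q = (\<lambda>(k::nat) (s::snr). power_for c (fst (snd s)))"
  have c: "c > 0" using R by (simp add: c_def)
  have q_meas: "q k \<in> borel_measurable S" for k unfolding q_def by measurable
  have later: "(\<integral>\<^sup>+ s. ennreal (q k s) \<partial>S) \<le> ennreal c * (\<integral>\<^sup>+ s. inverse (ennreal (fst (snd s))) \<partial>S)"
    for k
  proof -
    have "(\<integral>\<^sup>+ s. ennreal (q k s) \<partial>S) \<le> (\<integral>\<^sup>+ s. ennreal c * inverse (ennreal (fst (snd s))) \<partial>S)"
      using c by (intro nn_integral_mono) (simp add: q_def power_for_le)
    also have "\<dots> = ennreal c * (\<integral>\<^sup>+ s. inverse (ennreal (fst (snd s))) \<partial>S)"
      by (rule nn_integral_cmult) measurable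
    finally show ?thesis .
  qed
  have "AE g in rest_law S K. snd (bstate (real K * R) (memoryless q) (g(1 := x)) K) \<le> 0"
    using AE_rest_slots[OF good]
  proof (rule eventually_mono)
    fix g :: "nat \<Rightarrow> snr" assume "\<forall>k\<in>{2..K}. fst (g k) = 0 \<and> 0 < fst (snd (g k))"
    then have "\<forall>k\<in>{1..K}. fst ((g(1 := x)) k) = 0 \<and> 0 < fst (snd ((g(1 := x)) k))"
      using x by auto
    from constant_rate_completes[OF R K, of "g(1 := x)", OF this]
    show "snd (bstate (real K * R) (memoryless q) (g(1 := x)) K) \<le> 0"
      by (simp add: q_def c_def)
  qed
  then have "feasible S K (real K * R) x (memoryless q)"
    using c q_meas by (intro feasible_memoryless) (simp_all add: q_def power_for_nonneg)
  then have "Jstar S K (real K * R) x \<le> ennreal (q 1 x) + (\<Sum>k=2..K. \<integral>\<^sup>+ s. ennreal (q k s) \<partial>S)"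
    using K q_meas by (intro Jstar_memoryless)
  also have "\<dots> \<le> ennreal c * inverse (ennreal (fst (snd x)))
      + of_nat (card {2..K}) * (ennreal c * (\<integral>\<^sup>+ s. inverse (ennreal (fst (snd s))) \<partial>S))"
    using c later by (intro add_mono sum_bounded_above) (simp_all add: q_def power_for_le)
  also have "\<dots> \<le> ennreal c * inverse (ennreal (fst (snd x)))
      + of_nat K * (ennreal c * (\<integral>\<^sup>+ s. inverse (ennreal (fst (snd s))) \<partial>S))"
    by (intro add_mono mult_right_mono) simp_all
  finally show ?thesis by (simp only: c_def)
qed

lemma Jstar_two_slot:
  assumes B: "B > 0" and K: "K \<ge> 2"
    and good: "AE y in S. 0 \<le> fst (snd y) \<and> 0 \<le> snd (snd y) \<and> 0 < max (fst (snd y)) (snd (snd y))"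
    and x: "0 \<le> fst x" "0 \<le> fst (snd x)"
  shows "Jstar S K B x \<le> ennreal (exp B - 1) * inverse (ennreal (max (fst x) (fst (snd x))))
      + ennreal (exp B - 1) * (\<integral>\<^sup>+ s. inverse (ennreal (max (fst (snd s)) (snd (snd s)))) \<partial>S)"
    (is "_ \<le> ?first + ?second")
proof (cases "0 < max (fst x) (fst (snd x))")
  case False
  then have "max (fst x) (fst (snd x)) = 0" using x by auto
  then show ?thesis using B by simp
next
  case True
  define q where "q = two_slot_powers (exp B - 1)"
  have c: "exp B - 1 > 0" using B by simp
  have q_meas: "q k \<in> borel_measurable S" for k
    unfolding q_def two_slot_powers_def by measurable
  have "AE g in rest_law S K. snd (bstate B (memoryless q) (g(1 := x)) K) \<le> 0"
    using AE_rest_slots[OF good]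
  proof (rule eventually_mono)
    fix g :: "nat \<Rightarrow> snr"
    assume "\<forall>k\<in>{2..K}. 0 \<le> fst (snd (g k)) \<and> 0 \<le> snd (snd (g k))
        \<and> 0 < max (fst (snd (g k))) (snd (snd (g k)))"
    then have "0 \<le> fst (snd (g 2))" "0 \<le> snd (snd (g 2))" "0 < max (fst (snd (g 2))) (snd (snd (g 2)))"
      using K by auto
    with two_slot_completes[OF B, of "g(1 := x)" K] x True K
    show "snd (bstate B (memoryless q) (g(1 := x)) K) \<le> 0"
      by (simp add: q_def)
  qed
  then have "feasible S K B x (memoryless q)"
    using c q_meas by (intro feasible_memoryless) (simp_all add: q_def two_slot_powers_def power_for_nonneg)
  then have "Jstar S K B x \<le> ennreal (q 1 x) + (\<Sum>k=2..K. \<integral>\<^sup>+ s. ennreal (q k s) \<partial>S)"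
    using K q_meas by (intro Jstar_memoryless) simp_all
  also have "(\<Sum>k=2..K. \<integral>\<^sup>+ s. ennreal (q k s) \<partial>S) = (\<integral>\<^sup>+ s. ennreal (q 2 s) \<partial>S)"
    using K by (subst sum.remove[of _ 2]) (auto simp: q_def two_slot_powers_def intro!: sum.neutral)
  also have "ennreal (q 1 x) + (\<integral>\<^sup>+ s. ennreal (q 2 s) \<partial>S) \<le> ?first + ?second"
  proof (rule add_mono)
    show "ennreal (q 1 x) \<le> ?first"
      using c by (simp add: q_def two_slot_powers_def power_for_le)
    have "(\<integral>\<^sup>+ s. ennreal (q 2 s) \<partial>S)
        \<le> (\<integral>\<^sup>+ s. ennreal (exp B - 1) * inverse (ennreal (max (fst (snd s)) (snd (snd s)))) \<partial>S)"
      using c by (intro nn_integral_mono) (simp add: q_def two_slot_powers_def power_for_le)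
    also have "\<dots> = ?second" by (rule nn_integral_cmult) measurable
    finally show "(\<integral>\<^sup>+ s. ennreal (q 2 s) \<partial>S) \<le> ?second" .
  qed
  finally show ?thesis .
qed

end

section \<open>The two per-slot laws of the theorem\<close>

context
  fixes M :: "real measure"
  assumes prob_M: "prob_space M" and sets_M [measurable_cong]: "sets M = sets borel"
begin

lemma prob_space_MM: "prob_space (M \<Otimes>\<^sub>M M)"
  by (intro prob_space_pair prob_M)

lemma slot_law_space_slot_law: "slot_law_space (slot_law M)"
  unfolding slot_law_space_def slot_law_space_axioms_def slot_law_def
  by (auto simp: prob_space_pair prob_M intro!: sets_pair_measure_cong sets_M)

lemma AE_slot_law:
  assumes "AE x in M. Q x"
  shows "AE s in slot_law M. Q (fst s) \<and> Q (fst (snd s)) \<and> Q (snd (snd s))"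
proof -
  have "AE s in slot_law M. Q (fst s)"
    unfolding slot_law_def by (rule AE_pair_fst[OF prob_M prob_space_MM assms])
  moreover have "AE s in slot_law M. Q (fst (snd s))" "AE s in slot_law M. Q (snd (snd s))"
    unfolding slot_law_def
    by (intro AE_pair_snd[OF prob_M prob_space_MM] AE_pair_fst[OF prob_M prob_M] AE_pair_snd[OF prob_M prob_M]
        assms)+
  ultimately show ?thesis by eventually_elim simp
qed

text \<open>Both pairs of links used by the two-slot relaying policy, (SR, SD) and (SD, RD),
  consist of two independent links with law M.\<close>
lemma nn_integral_slot_law_last_pair:
  assumes "h \<in> borel_measurable (M \<Otimes>\<^sub>M M)"
  shows "(\<integral>\<^sup>+ s. h (snd s) \<partial>slot_law M) = integral\<^sup>N (M \<Otimes>\<^sub>M M) h"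
  unfolding slot_law_def by (rule nn_integral_pair_snd[OF prob_M prob_space_MM assms])

lemma nn_integral_slot_law_first_pair:
  assumes h [measurable]: "h \<in> borel_measurable (M \<Otimes>\<^sub>M M)"
  shows "(\<integral>\<^sup>+ s. h (fst s, fst (snd s)) \<partial>slot_law M) = integral\<^sup>N (M \<Otimes>\<^sub>M M) h"
proof -
  interpret M: prob_space M by (rule prob_M)
  interpret MM: prob_space "M \<Otimes>\<^sub>M M" by (rule prob_space_MM)
  have "(\<integral>\<^sup>+ s. h (fst s, fst (snd s)) \<partial>slot_law M) = (\<integral>\<^sup>+ a. \<integral>\<^sup>+ bc. h (a, fst bc) \<partial>(M \<Otimes>\<^sub>M M) \<partial>M)"
    unfolding slot_law_def by (subst MM.nn_integral_fst[symmetric]) simp_all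
  also have "\<dots> = (\<integral>\<^sup>+ a. \<integral>\<^sup>+ b. h (a, b) \<partial>M \<partial>M)"
    by (intro nn_integral_cong nn_integral_pair_fst[OF prob_M prob_M]) simp
  also have "\<dots> = integral\<^sup>N (M \<Otimes>\<^sub>M M) h"
    by (rule M.nn_integral_fst) simp
  finally show ?thesis .
qed

lemma measurable_kill_sr: "(\<lambda>(a, b, c). (0::real, b, c)) \<in> slot_law M \<rightarrow>\<^sub>M slot_law M"
proof -
  have "(\<lambda>(a, b, c). (0::real, b, c)) = (\<lambda>s. (0::real, snd s))" by auto
  moreover have "(0::real) \<in> space M" using sets_eq_imp_space_eq[OF sets_M] by simp
  ultimately show ?thesis unfolding slot_law_def by simp
qed

lemma slot_law_space_norelay: "slot_law_space (slot_law_norelay M)"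
proof -
  interpret S: slot_law_space "slot_law M" by (rule slot_law_space_slot_law)
  show ?thesis
    unfolding slot_law_space_def slot_law_space_axioms_def slot_law_norelay_def
    using S.sets_S by (simp add: S.prob_space_distr measurable_kill_sr)
qed

lemma AE_norelay:
  assumes "AE x in M. 0 \<le> x"
  shows "AE s in slot_law_norelay M. fst s = 0 \<and> 0 \<le> fst (snd s)"
  unfolding slot_law_norelay_def
proof (subst AE_distr_iff[OF measurable_kill_sr])
  show "{s \<in> space (slot_law M). fst s = 0 \<and> 0 \<le> fst (snd s)} \<in> sets (slot_law M)"
    unfolding slot_law_def by measurable
  show "AE s in slot_law M. fst (case s of (a, b, c) \<Rightarrow> (0::real, b, c)) = 0
      \<and> 0 \<le> fst (snd (case s of (a, b, c) \<Rightarrow> (0::real, b, c)))"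
    using AE_slot_law[OF assms] by (rule eventually_mono) (auto split: prod.splits)
qed

lemma nn_integral_norelay_sd: "(\<integral>\<^sup>+ s. inverse (ennreal (fst (snd s))) \<partial>slot_law_norelay M) = Phi1 M"
proof -
  have "(\<integral>\<^sup>+ s. inverse (ennreal (fst (snd s))) \<partial>slot_law_norelay M)
      = (\<integral>\<^sup>+ s. inverse (ennreal (fst (snd s))) \<partial>slot_law M)"
    unfolding slot_law_norelay_def
    by (subst nn_integral_distr[OF measurable_kill_sr])
      (auto simp: slot_law_def split: prod.splits intro!: nn_integral_cong)
  also have "\<dots> = (\<integral>\<^sup>+ z. inverse (ennreal (fst z)) \<partial>(M \<Otimes>\<^sub>M M))"
    by (rule nn_integral_slot_law_last_pair) measurable
  also have "\<dots> = Phi1 M"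
    unfolding Phi1_def by (rule nn_integral_pair_fst[OF prob_M prob_M]) measurable
  finally show ?thesis .
qed

text \<open>Achievability without relaying: the constant-rate policy costs at most
  (e^R - 1)/gamma_SD in slot 1 and (e^R - 1) Phi_1 in expectation in each later slot.\<close>
lemma norelay_achievable:
  assumes nonneg: "AE x in M. 0 \<le> x" and R: "R > 0" and K: "K \<ge> 1" and Phi: "Phi1 M < \<infinity>"
  shows "NMESE_norelay M K R < \<infinity>"
proof -
  interpret S: slot_law_space "slot_law_norelay M" by (rule slot_law_space_norelay)
  define \<psi> where "\<psi> s = inverse (ennreal (fst (snd s)))" for s :: snr
  have \<psi>_meas: "\<psi> \<in> borel_measurable (slot_law_norelay M)" unfolding \<psi>_def by measurable
  have \<psi>_int: "integral\<^sup>N (slot_law_norelay M) \<psi> = Phi1 M"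
    unfolding \<psi>_def by (rule nn_integral_norelay_sd)
  \<comment> \<open>E[1/gamma_SD] < infinity forces gamma_SD > 0 almost surely\<close>
  have "AE s in slot_law_norelay M. \<psi> s \<noteq> \<infinity>"
    using nn_integral_PInf_AE[OF \<psi>_meas] \<psi>_int Phi by simp
  then have good: "AE s in slot_law_norelay M. fst s = 0 \<and> 0 < fst (snd s)"
    using AE_norelay[OF nonneg] by eventually_elim (auto simp: \<psi>_def ennreal_eq_0_iff)
  then have "AE x in slot_law_norelay M. Jstar (slot_law_norelay M) K (real K * R) x
      \<le> ennreal (exp R - 1) * \<psi> x + of_nat K * (ennreal (exp R - 1) * Phi1 M)"
    by (rule eventually_mono) (use S.Jstar_constant_rate[OF R K good] in \<open>simp add: \<psi>_def nn_integral_norelay_sd\<close>)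
  then show ?thesis
    unfolding NMESE_norelay_def using \<psi>_meas \<psi>_int Phi
    by (intro S.NMESE_finite) (simp_all add: nn_integral_cmult ennreal_mult_less_top of_nat_less_top)
qed

text \<open>Achievability with relaying: the two-slot policy costs at most (e^B - 1) times
  1/max(gamma_SR, gamma_SD) in slot 1 plus (e^B - 1) Phi_2 in expectation for slot 2.\<close>
lemma relay_achievable:
  assumes nonneg: "AE x in M. 0 \<le> x" and R: "R > 0" and K: "K \<ge> 2" and Phi: "Phi2 M < \<infinity>"
  shows "NMESE_relay M K R < \<infinity>"
proof -
  interpret S: slot_law_space "slot_law M" by (rule slot_law_space_slot_law)
  define f where "f z = inverse (ennreal (max (fst z) (snd z)))" for z :: "real \<times> real"
  have B: "real K * R > 0" using R K by simp
  have f_meas [measurable]: "f \<in> borel_measurable (M \<Otimes>\<^sub>M M)" unfolding f_def by measurable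
  have Phi2_eq: "Phi2 M = (\<integral>\<^sup>+ z. f z \<partial>(M \<Otimes>\<^sub>M M))" by (simp add: Phi2_def f_def)
  have first_int: "(\<integral>\<^sup>+ s. f (fst s, fst (snd s)) \<partial>slot_law M) = Phi2 M"
    unfolding Phi2_eq by (rule nn_integral_slot_law_first_pair[OF f_meas])
  have last_int: "(\<integral>\<^sup>+ s. f (snd s) \<partial>slot_law M) = Phi2 M"
    unfolding Phi2_eq by (rule nn_integral_slot_law_last_pair[OF f_meas])
  have "(\<lambda>s. f (snd s)) \<in> borel_measurable (slot_law M)" unfolding slot_law_def by measurable
  \<comment> \<open>Phi_2 < infinity forces max(gamma_SD, gamma_RD) > 0 almost surely\<close>
  from nn_integral_PInf_AE[OF this] have "AE s in slot_law M. f (snd s) \<noteq> \<infinity>"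
    using last_int Phi by simp
  then have good: "AE s in slot_law M. 0 \<le> fst (snd s) \<and> 0 \<le> snd (snd s)
      \<and> 0 < max (fst (snd s)) (snd (snd s))"
    using AE_slot_law[OF nonneg] by eventually_elim (auto simp: f_def ennreal_eq_0_iff not_le)
  have "AE x in slot_law M. Jstar (slot_law M) K (real K * R) x
      \<le> ennreal (exp (real K * R) - 1) * f (fst x, fst (snd x))
        + ennreal (exp (real K * R) - 1) * Phi2 M"
    using AE_slot_law[OF nonneg]
    by (rule eventually_mono) (use S.Jstar_two_slot[OF B K good] last_int in \<open>simp add: f_def\<close>)
  then show ?thesis
    unfolding NMESE_relay_def using first_int Phi
    by (intro S.NMESE_finite) (simp_all add: slot_law_def nn_integral_cmult ennreal_mult_less_top)
qed

text \<open>Converse without relaying: if Phi_1 is infinite, J* is at least (e^B - 1)/gamma_SD,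
  whose expectation is infinite.\<close>
lemma norelay_converse:
  assumes nonneg: "AE x in M. 0 \<le> x" and R: "R > 0" and K: "K \<ge> 1" and Phi: "Phi1 M = \<infinity>"
  shows "NMESE_norelay M K R = \<infinity>"
proof -
  interpret S: slot_law_space "slot_law_norelay M" by (rule slot_law_space_norelay)
  define B where "B = real K * R"
  have B: "B > 0" using R K by (simp add: B_def)
  have dead: "AE s in slot_law_norelay M. fst s = 0 \<and> 0 \<le> fst (snd s)"
    by (rule AE_norelay[OF nonneg])
  have inf: "(\<integral>\<^sup>+ s. inverse (ennreal (fst (snd s))) \<partial>slot_law_norelay M) = \<infinity>"
    using Phi by (simp add: nn_integral_norelay_sd)
  have "\<infinity> = ennreal (exp B - 1) * (\<integral>\<^sup>+ s. inverse (ennreal (fst (snd s))) \<partial>slot_law_norelay M)"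
    using inf B by simp
  also have "\<dots> = (\<integral>\<^sup>+ s. ennreal (exp B - 1) * inverse (ennreal (fst (snd s))) \<partial>slot_law_norelay M)"
    by (rule nn_integral_cmult[symmetric]) measurable
  also have "\<dots> \<le> (\<integral>\<^sup>+ x. Jstar (slot_law_norelay M) K B x \<partial>slot_law_norelay M)"
  proof (rule nn_integral_mono_AE)
    show "AE x in slot_law_norelay M.
        ennreal (exp B - 1) * inverse (ennreal (fst (snd x))) \<le> Jstar (slot_law_norelay M) K B x"
      using dead
    proof (rule eventually_mono)
      fix x :: snr assume "fst x = 0 \<and> 0 \<le> fst (snd x)"
      then show "ennreal (exp B - 1) * inverse (ennreal (fst (snd x))) \<le> Jstar (slot_law_norelay M) K B x"
        using S.Jstar_dead_relay_lower[OF B K _ _ dead inf] by simp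
    qed
  qed
  finally have "(\<integral>\<^sup>+ x. Jstar (slot_law_norelay M) K B x \<partial>slot_law_norelay M) = \<infinity>"
    by (simp add: top_unique)
  then show ?thesis
    using K by (simp add: NMESE_norelay_def NMESE_def B_def ennreal_eq_0_iff)
qed

end

theorem theorem4:
  fixes M :: "real measure" and R :: real
  assumes "prob_space M" and "sets M = sets borel" and "AE x in M. 0 \<le> x"
    and "R > 0"
  shows "(\<forall>K::nat. K \<ge> 1 \<longrightarrow> (NMESE_norelay M K R < \<infinity> \<longleftrightarrow> Phi1 M < \<infinity>)) \<and>
         (\<forall>K::nat. K \<ge> 2 \<longrightarrow> Phi2 M < \<infinity> \<longrightarrow> NMESE_relay M K R < \<infinity>)"
proof (intro conjI allI impI)
  fix K :: nat assume K: "K \<ge> 1"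
  show "NMESE_norelay M K R < \<infinity> \<longleftrightarrow> Phi1 M < \<infinity>"
  proof
    assume "NMESE_norelay M K R < \<infinity>"
    then show "Phi1 M < \<infinity>"
      using norelay_converse[OF assms K] by (metis infinity_ennreal_def top.not_eq_extremum)
  next
    assume "Phi1 M < \<infinity>"
    then show "NMESE_norelay M K R < \<infinity>" by (rule norelay_achievable[OF assms K])
  qed
next
  fix K :: nat assume "K \<ge> 2" "Phi2 M < \<infinity>"
  then show "NMESE_relay M K R < \<infinity>" by (rule relay_achievable[OF assms])
qed

end
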